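(* Let $t\in\mathbb{R}$ be such that $\beta_X<h(t)<\infty$ and $\mathcal{D}_t^\circ\ne\emptyset$. Then $x\mapsto M_x(t)$ is right-continuous on $x\ge0$, and for every $\varepsilon>0$ with $h(t)+\varepsilon\in\mathcal{D}_t^\circ$ there exists $K_\varepsilon>0$ such that $$M_x(t)\le K_\varepsilon e^{(h(t)+\varepsilon)x}\quad\forall x>0.$$ Furthermore, if either $h(t)\ge0$ or $\varepsilon<|h(t)|$, one can take $K_\varepsilon=\frac{H(h(t))}{1-\rho(t,\varepsilon)}$, where $H(a)=E[e^{-(0\wedge a)X}]+1$ and $\rho(t,\varepsilon)=E[e^{tY-(h(t)+\varepsilon)X}]$.
   Context: $(X_n,Y_n)_{n\ge1}$ are i.i.d. copies of $(X,Y)\in\mathbb{R}^2$; $X,Y$ nondegenerate and $\Pr\{\sup_{n\ge1}\sum_{i=1}^nX_i=\infty\}=1$. For $x\ge0$, $N(x)=\max\{n:\sum_{i=1}^kX_i\le x\ \forall k\le n\}$ if $X_1\le x$, else $N(x)=0$; $W(x)=\sum_{i=1}^{N(x)}Y_i$; $M_x(t)=E[e^{tW(x)}]$. $\mathcal{D}_t=\{s:E[e^{tY-sX}]\le1\}$, $h(t)=\inf\mathcal{D}_t$ ($\inf\emptyset=\infty$), $\beta_X=\limsup_{x\to\infty}\frac1x\log\Pr\{X>x\}$. $A^\circ$ is the interior of $A$, $a\wedge b=\min\{a,b\}$. *)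

theory Defs
  imports "HOL-Probability.Probability"
begin

text \<open>Indices are 0-based: the paper's (X_1,Y_1),(X_2,Y_2),... are X 0, X 1, ... here.\<close>

text \<open>N(x) = max{n : S_k <= x for all 1 <= k <= n} (0 if X_1 > x), where S_k is the k-th
  partial sum; equivalently the least m with S_(m+1) > x.\<close>
definition Nx :: "(nat \<Rightarrow> 'a \<Rightarrow> real) \<Rightarrow> real \<Rightarrow> 'a \<Rightarrow> nat" where
  "Nx X x \<omega> = (LEAST m. (\<Sum>i\<le>m. X i \<omega>) > x)"

definition Wx :: "(nat \<Rightarrow> 'a \<Rightarrow> real) \<Rightarrow> (nat \<Rightarrow> 'a \<Rightarrow> real) \<Rightarrow> real \<Rightarrow> 'a \<Rightarrow> real" where
  "Wx X Y x \<omega> = (\<Sum>i<Nx X x \<omega>. Y i \<omega>)"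

definition Mx :: "'a measure \<Rightarrow> (nat \<Rightarrow> 'a \<Rightarrow> real) \<Rightarrow> (nat \<Rightarrow> 'a \<Rightarrow> real) \<Rightarrow> real \<Rightarrow> real \<Rightarrow> ennreal" where
  "Mx M X Y x t = (\<integral>\<^sup>+ \<omega>. ennreal (exp (t * Wx X Y x \<omega>)) \<partial>M)"

definition Dt :: "'a measure \<Rightarrow> (nat \<Rightarrow> 'a \<Rightarrow> real) \<Rightarrow> (nat \<Rightarrow> 'a \<Rightarrow> real) \<Rightarrow> real \<Rightarrow> real set" where
  "Dt M X Y t = {s. (\<integral>\<^sup>+ \<omega>. ennreal (exp (t * Y 0 \<omega> - s * X 0 \<omega>)) \<partial>M) \<le> 1}"

definition ht :: "'a measure \<Rightarrow> (nat \<Rightarrow> 'a \<Rightarrow> real) \<Rightarrow> (nat \<Rightarrow> 'a \<Rightarrow> real) \<Rightarrow> real \<Rightarrow> ereal" where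
  "ht M X Y t = Inf (ereal ` Dt M X Y t)"

definition betaX :: "'a measure \<Rightarrow> (nat \<Rightarrow> 'a \<Rightarrow> real) \<Rightarrow> ereal" where
  "betaX M X = Limsup at_top (\<lambda>x::real.
     let p = measure M {\<omega> \<in> space M. X 0 \<omega> > x} in
     if p > 0 then ereal (ln p / x) else -\<infinity>)"

definition Hfun :: "'a measure \<Rightarrow> (nat \<Rightarrow> 'a \<Rightarrow> real) \<Rightarrow> real \<Rightarrow> ennreal" where
  "Hfun M X a = (\<integral>\<^sup>+ \<omega>. ennreal (exp (- (min 0 a) * X 0 \<omega>)) \<partial>M) + 1"

definition rho :: "'a measure \<Rightarrow> (nat \<Rightarrow> 'a \<Rightarrow> real) \<Rightarrow> (nat \<Rightarrow> 'a \<Rightarrow> real) \<Rightarrow> real \<Rightarrow> real \<Rightarrow> ennreal" where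
  "rho M X Y t \<epsilon> = (\<integral>\<^sup>+ \<omega>. ennreal (exp (t * Y 0 \<omega> - (real_of_ereal (ht M X Y t) + \<epsilon>) * X 0 \<omega>)) \<partial>M)"

end

theory Submission
  imports Defs
begin

text \<open>On the event that the renewal index N(x) equals n we have S_n \<le> x < S_(n+1), so for every s
  e^(t T_n) \<le> e^(s x) e^(t T_n - s S_n) e^(-min 0 s X_n), where S and T are the partial sums of
  X and Y. Summing over n and using independence gives
  M_x(t) \<le> e^(s x) E[e^(-min 0 s X)] \<Sum>_n \<phi>(s)^n with \<phi>(s) = E[e^(t Y - s X)],
  and \<phi>(s) < 1 in the interior of D_t because s \<mapsto> e^(t Y - s X) is strictly convex when X is
  nondegenerate. For s = h(t) + \<epsilon> the overshoot factor is at most H(h(t)), which is finite since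
  \<beta>_X < h(t). The same sum over the windows [x, x + 1] dominates e^(t W(y)) for y near x, and
  W(y) = W(x) for y slightly above x, so right continuity follows by dominated convergence.\<close>

lemma Nx_partial_sum_gt:
  assumes "\<exists>m. x < (\<Sum>i\<le>m. X i \<omega>)"
  shows "x < (\<Sum>i\<le>Nx X x \<omega>. X i \<omega>)"
  unfolding Nx_def using assms by (rule LeastI_ex)

lemma partial_sum_le_of_less_Nx:
  assumes "k < Nx X x \<omega>"
  shows "(\<Sum>i\<le>k. X i \<omega>) \<le> x"
  using not_less_Least[of k "\<lambda>m. x < (\<Sum>i\<le>m. X i \<omega>)"] assms by (simp add: Nx_def not_less)

lemma Nx_partial_sum_le:
  assumes "0 \<le> x"
  shows "(\<Sum>i<Nx X x \<omega>. X i \<omega>) \<le> x"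
  using assms partial_sum_le_of_less_Nx[of _ X x \<omega>]
  by (cases "Nx X x \<omega>") (auto simp: lessThan_Suc_atMost)

lemma Nx_eq_of_le:
  assumes "x \<le> y" "y < (\<Sum>i\<le>Nx X x \<omega>. X i \<omega>)"
  shows "Nx X y \<omega> = Nx X x \<omega>"
  unfolding Nx_def[of X y]
proof (rule Least_equality)
  show "y < (\<Sum>i\<le>Nx X x \<omega>. X i \<omega>)" by fact
  show "Nx X x \<omega> \<le> m" if "y < (\<Sum>i\<le>m. X i \<omega>)" for m
    using that assms(1) partial_sum_le_of_less_Nx[of m X x \<omega>] by (meson leI order.trans not_le)
qed

lemma measurable_Nx:
  assumes [measurable]: "\<And>n. X n \<in> borel_measurable M"
  shows "Nx X x \<in> M \<rightarrow>\<^sub>M count_space UNIV"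
  unfolding Nx_def[abs_def] by measurable

lemma measurable_Wx:
  assumes "\<And>n. X n \<in> borel_measurable M" "\<And>n. Y n \<in> borel_measurable M"
  shows "Wx X Y x \<in> borel_measurable M"
  unfolding Wx_def[abs_def]
  by (rule measurable_compose_countable[OF _ measurable_Nx, where f="\<lambda>n \<omega>. \<Sum>i<n. Y i \<omega>"])
     (use assms in auto)

lemma ennreal_term_le_suminf: "f k \<le> (\<Sum>i. f i :: ennreal)"
  using sum_le_suminf[of f "{k}"] by (simp add: summableI)

lemma suminf_geometric_ennreal:
  fixes q :: ennreal
  assumes "q < 1"
  shows "(\<Sum>n. q ^ n) = 1 / (1 - q)"
proof -
  obtain r where r: "q = ennreal r" "0 \<le> r" "r < 1"
    using assms by (cases q) (auto simp: ennreal_less_iff ennreal_1[symmetric] simp del: ennreal_1)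
  have "(\<Sum>n. ennreal r ^ n) = (\<Sum>n. ennreal (r ^ n))" using r by (simp add: ennreal_power)
  also have "\<dots> = ennreal (1 / (1 - r))"
    using r by (intro suminf_ennreal_eq geometric_sums) auto
  also have "\<dots> = 1 / (1 - ennreal r)"
    using r by (simp add: ennreal_minus divide_ennreal ennreal_1[symmetric] del: ennreal_1)
  finally show ?thesis by (simp add: r)
qed

lemma ennreal_divide_one_minus_less_top:
  fixes a q :: ennreal
  assumes "a < \<top>" "q < 1"
  shows "a / (1 - q) < \<top>"
  using assms by (auto simp: ennreal_divide_eq_top_iff less_top[symmetric] diff_eq_0_iff_ennreal not_le)

lemma nn_integral_exp_less_1_of_neighbours:
  fixes U Z :: "'a \<Rightarrow> real"
  assumes [measurable]: "U \<in> borel_measurable M" "Z \<in> borel_measurable M"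
    and "0 < \<delta>"
    and "(\<integral>\<^sup>+\<omega>. ennreal (exp (U \<omega> - (s - \<delta>) * Z \<omega>)) \<partial>M) \<le> 1"
    and "(\<integral>\<^sup>+\<omega>. ennreal (exp (U \<omega> - (s + \<delta>) * Z \<omega>)) \<partial>M) \<le> 1"
    and "\<not> (AE \<omega> in M. Z \<omega> = 0)"
  shows "(\<integral>\<^sup>+\<omega>. ennreal (exp (U \<omega> - s * Z \<omega>)) \<partial>M) < 1"
proof -
  define f where "f \<omega> = exp (U \<omega> - s * Z \<omega>)" for \<omega>
  \<comment> \<open>the defect in midpoint convexity of \<open>s \<mapsto> exp (U - s * Z)\<close>; it vanishes only where \<open>Z = 0\<close>\<close>
  define d where "d \<omega> = f \<omega> * (cosh (\<delta> * Z \<omega>) - 1)" for \<omega>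
  have [measurable]: "cosh \<in> borel_measurable (borel :: real measure)"
    by (intro borel_measurable_continuous_onI continuous_intros)
  have [measurable]: "f \<in> borel_measurable M" "d \<in> borel_measurable M"
    unfolding f_def[abs_def] d_def[abs_def] by measurable
  have d_nonneg: "0 \<le> d \<omega>" for \<omega>
    using cosh_real_ge_1[of "\<delta> * Z \<omega>"] by (simp add: d_def f_def)
  have "2 * (ennreal (f \<omega>) + ennreal (d \<omega>))
      = ennreal (exp (U \<omega> - (s - \<delta>) * Z \<omega>)) + ennreal (exp (U \<omega> - (s + \<delta>) * Z \<omega>))" for \<omega>
  proof -
    have "2 * (f \<omega> + d \<omega>) = exp (U \<omega> - (s - \<delta>) * Z \<omega>) + exp (U \<omega> - (s + \<delta>) * Z \<omega>)"
      by (simp add: d_def f_def cosh_field_def exp_add[symmetric] algebra_simps)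
    then show ?thesis
      using d_nonneg[of \<omega>] unfolding f_def
      by (metis ennreal_plus ennreal_mult' ennreal_numeral zero_le_numeral exp_ge_zero add_nonneg_nonneg)
  qed
  then have "2 * ((\<integral>\<^sup>+\<omega>. f \<omega> \<partial>M) + (\<integral>\<^sup>+\<omega>. d \<omega> \<partial>M))
      = (\<integral>\<^sup>+\<omega>. exp (U \<omega> - (s - \<delta>) * Z \<omega>) \<partial>M) + (\<integral>\<^sup>+\<omega>. exp (U \<omega> - (s + \<delta>) * Z \<omega>) \<partial>M)"
    by (simp add: nn_integral_add[symmetric] nn_integral_cmult[symmetric] del: ennreal_plus)
  also have "\<dots> \<le> 2 * 1" using add_mono[OF assms(4,5)] by simp
  finally have sum_le_1: "(\<integral>\<^sup>+\<omega>. f \<omega> \<partial>M) + (\<integral>\<^sup>+\<omega>. d \<omega> \<partial>M) \<le> 1"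
    by (subst (asm) ennreal_mult_le_mult_iff) auto
  show ?thesis
  proof (rule ccontr)
    assume "\<not> ?thesis"
    then have "1 \<le> (\<integral>\<^sup>+\<omega>. f \<omega> \<partial>M)" by (simp add: f_def not_less)
    then have "1 + (\<integral>\<^sup>+\<omega>. d \<omega> \<partial>M) \<le> 1 + 0"
      using order_trans[OF add_right_mono sum_le_1] by simp
    then have "(\<integral>\<^sup>+\<omega>. d \<omega> \<partial>M) = 0" by (simp add: ennreal_add_left_cancel_le)
    then have "AE \<omega> in M. d \<omega> = 0"
      using d_nonneg by (simp add: nn_integral_0_iff_AE)
    then have "AE \<omega> in M. Z \<omega> = 0"
      by eventually_elim (use \<open>0 < \<delta>\<close> in \<open>simp add: d_def f_def\<close>)
    with assms(6) show False by blast
  qed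
qed

lemma betaX_tail_bound:
  assumes "betaX M X < ereal b"
  obtains a where "\<And>x. a \<le> x \<Longrightarrow> measure M {\<omega> \<in> space M. x < X 0 \<omega>} \<le> exp (b * x)"
proof -
  have "eventually (\<lambda>x. (let p = measure M {\<omega> \<in> space M. x < X 0 \<omega>} in
      if p > 0 then ereal (ln p / x) else -\<infinity>) < ereal b) at_top"
    using assms unfolding betaX_def by (rule Limsup_lessD)
  then have "eventually (\<lambda>x. measure M {\<omega> \<in> space M. x < X 0 \<omega>} \<le> exp (b * x)) at_top"
    using eventually_gt_at_top[of 0]
  proof eventually_elim
    case (elim x)
    define p where "p = measure M {\<omega> \<in> space M. x < X 0 \<omega>}"
    have "p \<le> exp (b * x)"
    proof (cases "p > 0")
      case True
      with elim have "ln p < b * x" by (simp add: p_def Let_def divide_less_eq)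
      then have "exp (ln p) < exp (b * x)" by simp
      with True show ?thesis by simp
    next
      case False
      then show ?thesis by (simp add: p_def not_less measure_le_0_iff)
    qed
    then show ?case by (simp add: p_def)
  qed
  then show ?thesis using that by (auto simp: eventually_at_top_linorder)
qed

lemma exp_le_indicator_sum:
  fixes a c z :: real
  assumes "0 \<le> c"
  shows "ennreal (exp (c * z))
    \<le> exp (c * a) + (\<Sum>k. ennreal (exp (c * (a + real k + 1))) * indicator {a + real k<..} z)"
proof (cases "z \<le> a")
  case True
  then have "ennreal (exp (c * z)) \<le> exp (c * a)"
    using assms by (intro ennreal_leI) (simp add: mult_left_mono)
  then show ?thesis by (rule order_trans) (rule add_increasing2, auto)
next
  case False
  define k where "k = nat (\<lceil>z - a\<rceil> - 1)"
  have "real k = of_int \<lceil>z - a\<rceil> - 1" using False by (simp add: k_def)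
  then have k: "a + real k < z" "z \<le> a + real k + 1"
    using ceiling_correct[of "z - a"] by linarith+
  then have "ennreal (exp (c * z)) \<le> ennreal (exp (c * (a + real k + 1))) * indicator {a + real k<..} z"
    using assms by (auto intro!: ennreal_leI mult_left_mono)
  also have "\<dots> \<le> (\<Sum>k. ennreal (exp (c * (a + real k + 1))) * indicator {a + real k<..} z)"
    by (rule ennreal_term_le_suminf)
  finally show ?thesis by (rule order_trans) (rule add_increasing, auto)
qed

lemma (in finite_measure) nn_integral_exp_finite_of_tail:
  assumes [measurable]: "Z \<in> borel_measurable M" and "0 \<le> c" "c + b < 0"
    and tail: "\<And>x. a \<le> x \<Longrightarrow> measure M {\<omega> \<in> space M. x < Z \<omega>} \<le> exp (b * x)"
  shows "(\<integral>\<^sup>+\<omega>. exp (c * Z \<omega>) \<partial>M) < \<top>"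
proof -
  define q where "q = exp (c + b)"
  define A where "A = exp (c * (a + 1) + b * a)"
  have q: "0 \<le> q" "q < 1" using assms(3) by (auto simp: q_def)
  have tail_event: "(\<integral>\<^sup>+\<omega>. indicator {r<..} (Z \<omega>) \<partial>M) = emeasure M {\<omega> \<in> space M. r < Z \<omega>}" for r
  proof -
    have "(\<integral>\<^sup>+\<omega>. indicator {r<..} (Z \<omega>) \<partial>M) = (\<integral>\<^sup>+\<omega>. indicator {\<omega> \<in> space M. r < Z \<omega>} \<omega> \<partial>M)"
      by (intro nn_integral_cong) (auto split: split_indicator)
    then show ?thesis by simp
  qed
  have "(\<integral>\<^sup>+\<omega>. exp (c * Z \<omega>) \<partial>M)
      \<le> (\<integral>\<^sup>+\<omega>. exp (c * a) + (\<Sum>k. ennreal (exp (c * (a + real k + 1))) * indicator {a + real k<..} (Z \<omega>)) \<partial>M)"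
    using assms(2) by (intro nn_integral_mono exp_le_indicator_sum)
  also have "\<dots> = exp (c * a) * emeasure M (space M)
      + (\<Sum>k. ennreal (exp (c * (a + real k + 1))) * emeasure M {\<omega> \<in> space M. a + real k < Z \<omega>})"
    by (simp add: nn_integral_add nn_integral_suminf nn_integral_cmult tail_event)
  also have "\<dots> \<le> exp (c * a) * emeasure M (space M) + (\<Sum>k. ennreal (A * q ^ k))"
  proof (intro add_left_mono suminf_le)
    fix k
    have "ennreal (exp (c * (a + real k + 1))) * emeasure M {\<omega> \<in> space M. a + real k < Z \<omega>}
        \<le> ennreal (exp (c * (a + real k + 1)) * exp (b * (a + real k)))"
      using tail[of "a + real k"] by (simp add: emeasure_eq_measure ennreal_mult'[symmetric] mult_left_mono)
    also have "exp (c * (a + real k + 1)) * exp (b * (a + real k)) = A * q ^ k"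
      by (simp add: A_def q_def exp_add[symmetric] exp_of_nat_mult[symmetric] algebra_simps)
    finally show "ennreal (exp (c * (a + real k + 1))) * emeasure M {\<omega> \<in> space M. a + real k < Z \<omega>}
        \<le> ennreal (A * q ^ k)" .
  qed auto
  also have "(\<Sum>k. ennreal (A * q ^ k)) = ennreal (A * (1 / (1 - q)))"
    using q by (intro suminf_ennreal_eq sums_mult geometric_sums) (auto simp: A_def)
  also have "exp (c * a) * emeasure M (space M) + ennreal (A * (1 / (1 - q))) < \<top>"
    using emeasure_finite[of "space M"] by (simp add: ennreal_mult_eq_top_iff less_top[symmetric])
  finally show ?thesis .
qed

lemma (in prob_space) Hfun_finite:
  assumes [measurable]: "X 0 \<in> borel_measurable M" and "betaX M X < ereal h"
  shows "Hfun M X h < \<top>"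
proof (cases "0 \<le> h")
  case True
  then show ?thesis by (simp add: Hfun_def emeasure_space_1)
next
  case False
  obtain b where b: "betaX M X < ereal b" "b < h"
    using ereal_dense2[OF assms(2)] by auto
  obtain a where "\<And>x. a \<le> x \<Longrightarrow> measure M {\<omega> \<in> space M. x < X 0 \<omega>} \<le> exp (b * x)"
    using betaX_tail_bound[OF b(1)] by blast
  then have "(\<integral>\<^sup>+\<omega>. exp (- h * X 0 \<omega>) \<partial>M) < \<top>"
    using False b(2) by (intro nn_integral_exp_finite_of_tail) auto
  with False show ?thesis by (simp add: Hfun_def)
qed

lemma Hfun_divide_pos: "0 < Hfun M X a / (1 - q)"
proof -
  have "0 < Hfun M X a"
    unfolding Hfun_def by (rule less_le_trans[OF zero_less_one add_increasing[OF zero_le order_refl]])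
  moreover have "1 - q < \<top>" by (rule le_less_trans[OF diff_le_self_ennreal]) simp
  ultimately show ?thesis by (simp add: ennreal_zero_less_divide)
qed

lemma (in prob_space) nn_integral_iid_prod:
  fixes f g :: "'b \<Rightarrow> ennreal"
  assumes indep: "indep_vars (\<lambda>_. N) Z UNIV"
    and ident: "\<And>i. distr M N (Z i) = distr M N (Z 0)"
    and [measurable]: "f \<in> borel_measurable N" "g \<in> borel_measurable N"
  shows "(\<integral>\<^sup>+\<omega>. (\<Prod>i<n. f (Z i \<omega>)) * g (Z n \<omega>) \<partial>M)
    = (\<integral>\<^sup>+\<omega>. f (Z 0 \<omega>) \<partial>M) ^ n * (\<integral>\<^sup>+\<omega>. g (Z 0 \<omega>) \<partial>M)"
proof -
  have [measurable]: "Z i \<in> M \<rightarrow>\<^sub>M N" for i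
    using indep by (simp add: indep_vars_def)
  have ident_integral: "(\<integral>\<^sup>+\<omega>. u (Z i \<omega>) \<partial>M) = (\<integral>\<^sup>+\<omega>. u (Z 0 \<omega>) \<partial>M)"
    if [measurable]: "u \<in> borel_measurable N" for u :: "'b \<Rightarrow> ennreal" and i
    using nn_integral_distr[of "Z i" M N u] nn_integral_distr[of "Z 0" M N u] ident[of i] by simp
  define F where "F i = (if i < n then f else g)" for i
  have [measurable]: "F i \<in> borel_measurable N" for i by (simp add: F_def)
  have "(\<integral>\<^sup>+\<omega>. (\<Prod>i<n. f (Z i \<omega>)) * g (Z n \<omega>) \<partial>M) = (\<integral>\<^sup>+\<omega>. (\<Prod>i<Suc n. F i (Z i \<omega>)) \<partial>M)"
    by (simp add: F_def)
  also have "\<dots> = (\<Prod>i<Suc n. \<integral>\<^sup>+\<omega>. F i (Z i \<omega>) \<partial>M)"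
    by (intro indep_vars_nn_integral indep_vars_subset[OF indep_vars_compose2[OF indep]]) auto
  also have "\<dots> = (\<Prod>i<Suc n. \<integral>\<^sup>+\<omega>. F i (Z 0 \<omega>) \<partial>M)"
    by (rule prod.cong[OF refl], rule ident_integral) simp
  also have "\<dots> = (\<integral>\<^sup>+\<omega>. f (Z 0 \<omega>) \<partial>M) ^ n * (\<integral>\<^sup>+\<omega>. g (Z 0 \<omega>) \<partial>M)"
    by (simp add: F_def)
  finally show ?thesis .
qed

locale iid_renewal = prob_space M for M :: "'a measure" +
  fixes X Y :: "nat \<Rightarrow> 'a \<Rightarrow> real" and t :: real
  assumes measurable_X [measurable]: "\<And>n. X n \<in> borel_measurable M"
    and measurable_Y [measurable]: "\<And>n. Y n \<in> borel_measurable M"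
    and indep: "indep_vars (\<lambda>_. borel \<Otimes>\<^sub>M borel) (\<lambda>n \<omega>. (X n \<omega>, Y n \<omega>)) UNIV"
    and ident: "\<And>n. distr M (borel \<Otimes>\<^sub>M borel) (\<lambda>\<omega>. (X n \<omega>, Y n \<omega>))
      = distr M (borel \<Otimes>\<^sub>M borel) (\<lambda>\<omega>. (X 0 \<omega>, Y 0 \<omega>))"
    and partial_sums_unbounded: "AE \<omega> in M. (SUP n. ereal (\<Sum>i\<le>n. X i \<omega>)) = \<infinity>"
begin

definition increment_mgf :: "real \<Rightarrow> ennreal" where
  "increment_mgf s = (\<integral>\<^sup>+\<omega>. exp (t * Y 0 \<omega> - s * X 0 \<omega>) \<partial>M)"

definition overshoot_mgf :: "real \<Rightarrow> ennreal" where
  "overshoot_mgf s = (\<integral>\<^sup>+\<omega>. exp (- min 0 s * X 0 \<omega>) \<partial>M)"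

definition renewal_dominant :: "real \<Rightarrow> real \<Rightarrow> 'a \<Rightarrow> ennreal" where
  "renewal_dominant a b \<omega> = (\<Sum>n. if (\<Sum>i<n. X i \<omega>) \<le> a \<and> b < (\<Sum>i<Suc n. X i \<omega>)
     then ennreal (exp (t * (\<Sum>i<n. Y i \<omega>))) else 0)"

lemma measurable_renewal_dominant [measurable]: "renewal_dominant a b \<in> borel_measurable M"
  unfolding renewal_dominant_def[abs_def] by measurable

lemma AE_partial_sums_unbounded: "AE \<omega> in M. \<forall>x. \<exists>m. x < (\<Sum>i\<le>m. X i \<omega>)"
  using partial_sums_unbounded
proof eventually_elim
  case (elim \<omega>)
  show ?case
  proof
    fix x
    have "ereal x < (SUP n. ereal (\<Sum>i\<le>n. X i \<omega>))" using elim by simp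
    then show "\<exists>m. x < (\<Sum>i\<le>m. X i \<omega>)" by (auto simp: less_SUP_iff)
  qed
qed

lemma nn_integral_increment_product:
  "(\<integral>\<^sup>+\<omega>. (\<Prod>i<n. ennreal (exp (t * Y i \<omega> - s * X i \<omega>))) * ennreal (exp (- min 0 s * X n \<omega>)) \<partial>M)
    = increment_mgf s ^ n * overshoot_mgf s"
  using nn_integral_iid_prod[OF indep ident,
      of "\<lambda>p. ennreal (exp (t * snd p - s * fst p))" "\<lambda>p. ennreal (exp (- min 0 s * fst p))" n]
  by (simp add: increment_mgf_def overshoot_mgf_def)

lemma exp_Wx_le_renewal_dominant:
  assumes "\<forall>x. \<exists>m. x < (\<Sum>i\<le>m. X i \<omega>)" "0 \<le> y" "b \<le> y" "y \<le> a"
  shows "ennreal (exp (t * Wx X Y y \<omega>)) \<le> renewal_dominant a b \<omega>"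
proof -
  define n where "n = Nx X y \<omega>"
  have "(\<Sum>i<n. X i \<omega>) \<le> a"
    using Nx_partial_sum_le[OF \<open>0 \<le> y\<close>, of X \<omega>] assms(4) by (simp add: n_def)
  moreover have "b < (\<Sum>i<Suc n. X i \<omega>)"
    using Nx_partial_sum_gt[of y X \<omega>] assms(1,3) by (simp add: n_def lessThan_Suc_atMost)
  ultimately show ?thesis
    unfolding renewal_dominant_def Wx_def n_def[symmetric]
    using ennreal_term_le_suminf[of "\<lambda>n. if (\<Sum>i<n. X i \<omega>) \<le> a \<and> b < (\<Sum>i<Suc n. X i \<omega>)
      then ennreal (exp (t * (\<Sum>i<n. Y i \<omega>))) else 0" n] by simp
qed

lemma exp_partial_sum_le:
  assumes "(\<Sum>i<n. X i \<omega>) \<le> a" "b < (\<Sum>i<Suc n. X i \<omega>)"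
  shows "exp (t * (\<Sum>i<n. Y i \<omega>))
    \<le> exp (max (s * a) (s * b)) * exp (\<Sum>i<n. t * Y i \<omega> - s * X i \<omega>) * exp (- min 0 s * X n \<omega>)"
proof -
  have "s * (\<Sum>i<n. X i \<omega>) + min 0 s * X n \<omega> \<le> max (s * a) (s * b)"
  proof (cases "0 \<le> s")
    case True
    then show ?thesis using assms(1) by (simp add: mult_left_mono le_max_iff_disj)
  next
    case False
    then have "s * (\<Sum>i<Suc n. X i \<omega>) \<le> s * b" using assms(2) by (simp add: mult_left_mono_neg)
    with False show ?thesis by (simp add: le_max_iff_disj distrib_left)
  qed
  then show ?thesis
    by (simp add: exp_add[symmetric] sum_subtractf sum_distrib_left)
qed

lemma nn_integral_renewal_dominant_le:
  "(\<integral>\<^sup>+\<omega>. renewal_dominant a b \<omega> \<partial>M)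
    \<le> exp (max (s * a) (s * b)) * (\<Sum>n. increment_mgf s ^ n) * overshoot_mgf s"
proof -
  let ?c = "ennreal (exp (max (s * a) (s * b)))"
  have "(\<integral>\<^sup>+\<omega>. renewal_dominant a b \<omega> \<partial>M) = (\<Sum>n. \<integral>\<^sup>+\<omega>. (if (\<Sum>i<n. X i \<omega>) \<le> a \<and> b < (\<Sum>i<Suc n. X i \<omega>)
      then ennreal (exp (t * (\<Sum>i<n. Y i \<omega>))) else 0) \<partial>M)"
    unfolding renewal_dominant_def by (rule nn_integral_suminf) measurable
  also have "\<dots> \<le> (\<Sum>n. \<integral>\<^sup>+\<omega>. ?c * ((\<Prod>i<n. ennreal (exp (t * Y i \<omega> - s * X i \<omega>)))
      * ennreal (exp (- min 0 s * X n \<omega>))) \<partial>M)"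
  proof (intro suminf_le nn_integral_mono)
    fix n \<omega>
    show "(if (\<Sum>i<n. X i \<omega>) \<le> a \<and> b < (\<Sum>i<Suc n. X i \<omega>) then ennreal (exp (t * (\<Sum>i<n. Y i \<omega>))) else 0)
      \<le> ?c * ((\<Prod>i<n. ennreal (exp (t * Y i \<omega> - s * X i \<omega>))) * ennreal (exp (- min 0 s * X n \<omega>)))"
      using exp_partial_sum_le[where n=n and \<omega>=\<omega> and a=a and b=b and s=s]
      by (auto simp: prod_ennreal exp_sum ennreal_mult'[symmetric] prod_nonneg intro!: ennreal_leI)
  qed auto
  also have "\<dots> = ?c * (\<Sum>n. increment_mgf s ^ n) * overshoot_mgf s"
    using nn_integral_increment_product by (simp add: nn_integral_cmult mult.assoc)
  finally show ?thesis .
qed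

lemma Mx_le_overshoot_mgf_exp:
  assumes "increment_mgf s < 1" "0 \<le> y"
  shows "Mx M X Y y t \<le> overshoot_mgf s / (1 - increment_mgf s) * exp (s * y)"
proof -
  have "Mx M X Y y t \<le> (\<integral>\<^sup>+\<omega>. renewal_dominant y y \<omega> \<partial>M)"
    unfolding Mx_def using AE_partial_sums_unbounded
    by (intro nn_integral_mono_AE) (auto elim!: eventually_mono intro: exp_Wx_le_renewal_dominant[OF _ assms(2)])
  also have "\<dots> \<le> exp (s * y) * (\<Sum>n. increment_mgf s ^ n) * overshoot_mgf s"
    using nn_integral_renewal_dominant_le[of y y s] by simp
  also have "\<dots> = overshoot_mgf s / (1 - increment_mgf s) * exp (s * y)"
    using assms(1) by (simp add: suminf_geometric_ennreal divide_ennreal_def mult_ac)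
  finally show ?thesis .
qed

lemma Mx_continuous_at_right:
  assumes "increment_mgf s < 1" "overshoot_mgf s < \<top>" "0 \<le> x"
  shows "continuous (at_right x) (\<lambda>y. Mx M X Y y t)"
  unfolding continuous_within
proof (rule tendsto_at_right_sequentially[where b="x + 1"])
  fix S :: "nat \<Rightarrow> real"
  assume S: "\<And>n. x < S n" "\<And>n. S n < x + 1" "decseq S" "S \<longlonglongrightarrow> x"
  have [measurable]: "Wx X Y y \<in> borel_measurable M" for y
    by (rule measurable_Wx) auto
  show "(\<lambda>n. Mx M X Y (S n) t) \<longlonglongrightarrow> Mx M X Y x t"
    unfolding Mx_def
  proof (rule nn_integral_dominated_convergence[where w="renewal_dominant (x + 1) x"])
    show "AE \<omega> in M. ennreal (exp (t * Wx X Y (S n) \<omega>)) \<le> renewal_dominant (x + 1) x \<omega>" for n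
      using AE_partial_sums_unbounded
      by eventually_elim (rule exp_Wx_le_renewal_dominant, use S(1,2)[of n] assms(3) in auto)
    have "(\<integral>\<^sup>+\<omega>. renewal_dominant (x + 1) x \<omega> \<partial>M)
        \<le> exp (max (s * (x + 1)) (s * x)) * (\<Sum>n. increment_mgf s ^ n) * overshoot_mgf s"
      by (rule nn_integral_renewal_dominant_le)
    also have "\<dots> < \<top>"
      using assms(1,2) ennreal_divide_one_minus_less_top[of 1]
      by (simp add: suminf_geometric_ennreal ennreal_mult_less_top)
    finally show "(\<integral>\<^sup>+\<omega>. renewal_dominant (x + 1) x \<omega> \<partial>M) < \<infinity>" by simp
    show "AE \<omega> in M. (\<lambda>n. ennreal (exp (t * Wx X Y (S n) \<omega>))) \<longlonglongrightarrow> ennreal (exp (t * Wx X Y x \<omega>))"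
      using AE_partial_sums_unbounded
    proof eventually_elim
      case (elim \<omega>)
      have "eventually (\<lambda>n. S n < (\<Sum>i\<le>Nx X x \<omega>. X i \<omega>)) sequentially"
        using Nx_partial_sum_gt[of x X \<omega>] elim by (intro order_tendstoD(2)[OF S(4)]) auto
      then have "eventually (\<lambda>n. Wx X Y (S n) \<omega> = Wx X Y x \<omega>) sequentially"
      proof eventually_elim
        case (elim n)
        then show ?case using Nx_eq_of_le[where x=x and y="S n" and X=X and \<omega>=\<omega>] S(1)[of n]
          by (simp add: Wx_def)
      qed
      then show ?case by (intro tendsto_eventually) (auto elim: eventually_mono)
    qed
  qed (simp_all add: S)
qed simp

lemma increment_mgf_less_1:
  assumes "\<not> (AE \<omega> in M. X 0 \<omega> = 0)" "s \<in> interior (Dt M X Y t)"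
  shows "increment_mgf s < 1"
proof -
  obtain e where "0 < e" "ball s e \<subseteq> Dt M X Y t"
    using assms(2) by (auto simp: mem_interior)
  moreover have "s - e/2 \<in> ball s e" "s + e/2 \<in> ball s e" using \<open>0 < e\<close> by (auto simp: dist_real_def)
  ultimately have "s - e/2 \<in> Dt M X Y t" "s + e/2 \<in> Dt M X Y t" by auto
  then show ?thesis
    unfolding increment_mgf_def using \<open>0 < e\<close> assms(1)
    by (intro nn_integral_exp_less_1_of_neighbours[where \<delta>="e/2"]) (auto simp: Dt_def)
qed

lemma overshoot_mgf_le_Hfun:
  assumes "h \<le> u"
  shows "overshoot_mgf u \<le> Hfun M X h"
proof -
  have pointwise: "exp (- min 0 u * z) \<le> exp (- min 0 h * z) + 1" for z :: real
  proof (cases "0 \<le> z")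
    case True
    then have "- min 0 u * z \<le> - min 0 h * z" using assms by (intro mult_right_mono) auto
    then show ?thesis by (simp add: add_increasing2)
  next
    case False
    then have "0 \<le> min 0 u * z" by (intro mult_nonpos_nonpos) auto
    then have "exp (- min 0 u * z) \<le> 1" by simp
    with exp_gt_zero[of "- min 0 h * z"] show ?thesis by linarith
  qed
  have "overshoot_mgf u \<le> (\<integral>\<^sup>+\<omega>. ennreal (exp (- min 0 h * X 0 \<omega>) + 1) \<partial>M)"
    unfolding overshoot_mgf_def by (intro nn_integral_mono ennreal_leI pointwise)
  also have "\<dots> = Hfun M X h" by (simp add: Hfun_def nn_integral_add emeasure_space_1)
  finally show ?thesis .
qed

lemma Mx_le_Hfun_exp:
  assumes "\<not> (AE \<omega> in M. X 0 \<omega> = 0)" "s \<in> interior (Dt M X Y t)" "h \<le> s" "0 \<le> y"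
  shows "Mx M X Y y t \<le> Hfun M X h / (1 - increment_mgf s) * exp (s * y)"
proof -
  have "Mx M X Y y t \<le> overshoot_mgf s / (1 - increment_mgf s) * exp (s * y)"
    using assms by (intro Mx_le_overshoot_mgf_exp increment_mgf_less_1)
  also have "\<dots> \<le> Hfun M X h / (1 - increment_mgf s) * exp (s * y)"
    using assms(3) by (intro mult_right_mono divide_right_mono_ennreal overshoot_mgf_le_Hfun) auto
  finally show ?thesis .
qed

end

theorem lemma6p2:
  fixes M :: "'a measure" and X Y :: "nat \<Rightarrow> 'a \<Rightarrow> real" and t :: real
  assumes "prob_space M"
    and "\<And>n. X n \<in> borel_measurable M" and "\<And>n. Y n \<in> borel_measurable M"
    and "prob_space.indep_vars M (\<lambda>_. borel \<Otimes>\<^sub>M borel) (\<lambda>n \<omega>. (X n \<omega>, Y n \<omega>)) UNIV"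
    and "\<And>n. distr M (borel \<Otimes>\<^sub>M borel) (\<lambda>\<omega>. (X n \<omega>, Y n \<omega>))
              = distr M (borel \<Otimes>\<^sub>M borel) (\<lambda>\<omega>. (X 0 \<omega>, Y 0 \<omega>))"
    and "\<not> (\<exists>c. AE \<omega> in M. X 0 \<omega> = c)" and "\<not> (\<exists>c. AE \<omega> in M. Y 0 \<omega> = c)"
    and "AE \<omega> in M. (SUP n. ereal (\<Sum>i\<le>n. X i \<omega>)) = \<infinity>"
    and "betaX M X < ht M X Y t" and "ht M X Y t < \<infinity>"
    and "interior (Dt M X Y t) \<noteq> {}"
  shows "(\<forall>x\<ge>0. continuous (at_right x) (\<lambda>y. Mx M X Y y t))
    \<and> (\<forall>\<epsilon>>0. real_of_ereal (ht M X Y t) + \<epsilon> \<in> interior (Dt M X Y t) \<longrightarrow>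
         (\<exists>K>0. \<forall>x>0. Mx M X Y x t \<le> ennreal (K * exp ((real_of_ereal (ht M X Y t) + \<epsilon>) * x)))
       \<and> ((real_of_ereal (ht M X Y t) \<ge> 0 \<or> \<epsilon> < \<bar>real_of_ereal (ht M X Y t)\<bar>) \<longrightarrow>
            Hfun M X (real_of_ereal (ht M X Y t)) < \<top> \<and> rho M X Y t \<epsilon> < 1 \<and>
            (\<forall>x>0. Mx M X Y x t \<le> Hfun M X (real_of_ereal (ht M X Y t)) / (1 - rho M X Y t \<epsilon>)
                      * ennreal (exp ((real_of_ereal (ht M X Y t) + \<epsilon>) * x)))))"
proof -
  interpret iid_renewal M X Y t
    using assms(1-5,8) by (simp add: iid_renewal_def iid_renewal_axioms_def)
  have nondegenerate: "\<not> (AE \<omega> in M. X 0 \<omega> = 0)" using assms(6) by blast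
  obtain h where ht: "ht M X Y t = ereal h" using assms(9,10) by (cases "ht M X Y t") auto
  have h_le: "h \<le> u" if "u \<in> interior (Dt M X Y t)" for u
  proof -
    have "ereal h \<le> ereal u"
      unfolding ht[symmetric] ht_def using that interior_subset by (intro Inf_lower) blast
    then show ?thesis by simp
  qed
  have H_finite: "Hfun M X h < \<top>" using Hfun_finite[OF measurable_X] assms(9) by (simp add: ht)
  show ?thesis
    unfolding ht real_of_ereal.simps
  proof (intro conjI allI impI)
    fix x :: real assume "0 \<le> x"
    from assms(11) obtain s where s: "s \<in> interior (Dt M X Y t)" by auto
    have "overshoot_mgf s < \<top>" using overshoot_mgf_le_Hfun[OF h_le[OF s]] H_finite by (rule le_less_trans)
    with s \<open>0 \<le> x\<close> nondegenerate show "continuous (at_right x) (\<lambda>y. Mx M X Y y t)"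
      by (intro Mx_continuous_at_right increment_mgf_less_1)
  next
    fix \<epsilon> :: real assume s: "h + \<epsilon> \<in> interior (Dt M X Y t)"
    have rho: "rho M X Y t \<epsilon> = increment_mgf (h + \<epsilon>)" by (simp add: rho_def increment_mgf_def ht)
    show "Hfun M X h < \<top>" by (rule H_finite)
    show rho_less_1: "rho M X Y t \<epsilon> < 1" unfolding rho using nondegenerate s by (rule increment_mgf_less_1)
    show bound: "Mx M X Y x t \<le> Hfun M X h / (1 - rho M X Y t \<epsilon>) * exp ((h + \<epsilon>) * x)" if "0 < x" for x
      unfolding rho using nondegenerate s h_le[OF s] that by (intro Mx_le_Hfun_exp) auto
    define K where "K = enn2real (Hfun M X h / (1 - rho M X Y t \<epsilon>))"
    have "Hfun M X h / (1 - rho M X Y t \<epsilon>) = ennreal K"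
      using ennreal_divide_one_minus_less_top[OF H_finite rho_less_1] by (simp add: K_def less_top)
    moreover have "0 < K"
      using ennreal_divide_one_minus_less_top[OF H_finite rho_less_1] Hfun_divide_pos
      by (simp add: K_def enn2real_positive_iff)
    ultimately show "\<exists>K>0. \<forall>x>0. Mx M X Y x t \<le> ennreal (K * exp ((h + \<epsilon>) * x))"
      using bound by (auto simp: ennreal_mult)
  qed
qed

end
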